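(* Let $P(t)$ be a reciprocal polynomial, written $P(t)=(t-1)^L(t+1)^KP^*(t)$ with $L,K\ge0$ and $P^*(\pm1)\neq0$, and put $\widetilde P(t)=(t-1)^{2\lfloor L/2\rfloor}(t+1)^{2\lfloor K/2\rfloor}P^*(t)$. Then $$Z(\mathfrak I_{P(t)})=\{p(t)e+p(t^{-1})f+q(t)h\in\mathfrak{OA}:\ \widetilde P(t)\mid p(t),\ P(t)\mid q(t)\},$$ divisibility taken in $\mathbb C[t,t^{-1}]$. Consequently $\mathfrak I_{P(t)}$ is closed if and only if $L$ and $K$ are both even.
   Context: Work over $\mathbb C$. $\mathfrak{sl}_2$ has basis $e,f,h$ with $[e,f]=h$, $[h,e]=2e$, $[h,f]=-2f$. $L(\mathfrak{sl}_2)=\mathbb C[t,t^{-1}]\otimes\mathfrak{sl}_2$ is the loop algebra with bracket $[p(t)x,q(t)y]=p(t)q(t)[x,y]$. The Onsager algebra is the Lie subalgebra $\mathfrak{OA}=\{p(t)e+p(t^{-1})f+q(t)h:\ p,q\in\mathbb C[t,t^{-1}],\ q(t^{-1})=-q(t)\}$ of $L(\mathfrak{sl}_2)$. A reciprocal polynomial is a nonconstant monic $P\in\mathbb C[t]$ with $P(t)=\pm t^{\deg P}P(t^{-1})$. For a reciprocal polynomial $P$, $\mathfrak I_{P(t)}=\{p(t)e+p(t^{-1})f+q(t)h\in\mathfrak{OA}:\ p(t),q(t)\in P(t)\mathbb C[t,t^{-1}]\}$; it is an ideal of $\mathfrak{OA}$. For an ideal $I$ of a Lie algebra $\mathfrak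 L$, $Z(I)=\{x\in\mathfrak L:[x,\mathfrak L]\subset I\}$; a nonzero proper ideal $I$ is called closed if $Z(I)=I$. $\lfloor r\rfloor$ is the integer part. *)

theory Defs
  imports "HOL-Computational_Algebra.Computational_Algebra"
          "HOL-Computational_Algebra.Polynomial_FPS"
          "HOL-Computational_Algebra.Formal_Laurent_Series"
begin

definition laurent_polys :: "complex fls set" where
  "laurent_polys = {f. finite {n. fls_nth f n \<noteq> 0}}"

(* p(t) |-> p(t^-1) on Laurent polynomials *)
definition lrefl :: "complex fls \<Rightarrow> complex fls" where
  "lrefl f = (\<Sum>n\<in>{n. fls_nth f n \<noteq> 0}. fls_const (fls_nth f n) * fls_X_intpow (- n))"

definition ldvd :: "complex fls \<Rightarrow> complex fls \<Rightarrow> bool" where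
  "ldvd a b \<longleftrightarrow> (\<exists>r\<in>laurent_polys. b = a * r)"

definition lpoly :: "complex poly \<Rightarrow> complex fls" where
  "lpoly p = fps_to_fls (fps_of_poly p)"

(* Loop algebra L(sl2): the triple (a,b,c) stands for a e + b f + c h,
   with a,b,c Laurent polynomials; bracket from [e,f]=h, [h,e]=2e, [h,f]=-2f. *)
type_synonym loopel = "complex fls \<times> complex fls \<times> complex fls"

definition loop_alg :: "loopel set" where
  "loop_alg = {(a,b,c). a \<in> laurent_polys \<and> b \<in> laurent_polys \<and> c \<in> laurent_polys}"

fun lbr :: "loopel \<Rightarrow> loopel \<Rightarrow> loopel" where
  "lbr (a,b,c) (a',b',c') =
     (2 * (c * a' - a * c'), 2 * (b * c' - c * b'), a * b' - b * a')"

definition OA :: "loopel set" where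
  "OA = {(p, lrefl p, q) | p q. p \<in> laurent_polys \<and> q \<in> laurent_polys \<and> lrefl q = - q}"

definition IP :: "complex poly \<Rightarrow> loopel set" where
  "IP P = {(p, lrefl p, q) | p q. (p, lrefl p, q) \<in> OA \<and> ldvd (lpoly P) p \<and> ldvd (lpoly P) q}"

definition ZI :: "loopel set \<Rightarrow> loopel set" where
  "ZI I = {x \<in> OA. \<forall>y\<in>OA. lbr x y \<in> I}"

definition closed_ideal :: "loopel set \<Rightarrow> bool" where
  "closed_ideal I \<longleftrightarrow> I \<noteq> {(0, 0, 0)} \<and> I \<noteq> OA \<and> ZI I = I"

definition reciprocal :: "complex poly \<Rightarrow> bool" where
  "reciprocal P \<longleftrightarrow> degree P > 0 \<and> lead_coeff P = 1 \<and>
     (reflect_poly P = P \<or> reflect_poly P = - P)"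

end

(*
  Write x = p e + p(1/t) f + q h in OA.  Bracketing x with e + f and with (t - 1/t) h shows that
  x lies in Z(I_P) only if P divides q, p - p(1/t) and (t - 1/t) p.  The last condition alone loses
  one factor t - 1 (resp. t + 1) of P.  It is recovered exactly when the multiplicity is even:
  if p = (t - c)^N u with N odd and c = 1 or -1, then (t - c)^(N+1) divides p - p(1/t) only if
  it divides p, because the cofactor of (t - c)^N in p - p(1/t) takes the value 2 u(c) at c.
  Hence Z(I_P) forces P~ | p.  Conversely, antisymmetric Laurent polynomials are multiples of
  t^2 - 1, and P divides P~ (t^2 - 1).  As P~ is self-reciprocal of even degree, P~ | p gives
  p = Q w with Q = t^(-deg P~ / 2) P~ invariant under t -> 1/t, so the components p s and
  p r(1/t) - p(1/t) r of a bracket with r e + r(1/t) f + s h are P~ times antisymmetric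
  factors, hence multiples of P.  Finally Z(I_P) = I_P means P | P~, i.e. L and K are even.
*)
theory Submission
  imports Defs "HOL-Computational_Algebra.Field_as_Ring"
begin

section \<open>Laurent polynomials and the reflection t -> 1/t\<close>

lemma lpoly_nth: "fls_nth (lpoly g) n = (if n < 0 then 0 else coeff g (nat n))"
  by (simp add: lpoly_def)

lemma lpoly_0 [simp]: "lpoly 0 = 0"
  and lpoly_eq_iff [simp]: "lpoly g = lpoly h \<longleftrightarrow> g = h"
  and lpoly_diff: "lpoly (g - h) = lpoly g - lpoly h"
  and lpoly_uminus: "lpoly (- g) = - lpoly g"
  and lpoly_mult: "lpoly (g * h) = lpoly g * lpoly h"
  by (simp_all add: lpoly_def fps_of_poly_eq_iff fps_of_poly_diff
      fps_of_poly_uminus fps_of_poly_mult fls_times_fps_to_fls)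

lemma lpoly_eq_0_iff [simp]: "lpoly g = 0 \<longleftrightarrow> g = 0"
  using lpoly_eq_iff[of g 0] by (simp only: lpoly_0)

lemma lpoly_pCons_0: "lpoly [:c:] = fls_const c"
  by (rule fls_eqI) (simp add: lpoly_nth coeff_pCons split: nat.splits)

lemma lpoly_monom_mult: "lpoly (monom 1 n * g) = fls_shift (- int n) (lpoly g)"
  by (rule fls_eqI) (auto simp: lpoly_nth coeff_monom_mult nat_diff_distrib)

lemma shift_lpoly_in_laurent_polys [simp]: "fls_shift k (lpoly g) \<in> laurent_polys"
proof -
  have "{n. fls_nth (fls_shift k (lpoly g)) n \<noteq> 0} \<subseteq> {-k..int (degree g) - k}"
    by (auto simp: lpoly_nth coeff_eq_0 intro: ccontr le_degree)
  then show ?thesis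
    unfolding laurent_polys_def using finite_subset by blast
qed

lemma laurent_polyE:
  assumes "f \<in> laurent_polys"
  obtains k g where "f = fls_shift (int k) (lpoly g)" and "degree g \<le> 2 * k"
proof -
  have fin: "finite {n. fls_nth f n \<noteq> 0}" using assms by (simp add: laurent_polys_def)
  obtain B :: nat where B: "\<And>n. fls_nth f n \<noteq> 0 \<Longrightarrow> - int B \<le> n \<and> n \<le> int B"
  proof -
    define B where "B = nat (Max (insert 0 (abs ` {n. fls_nth f n \<noteq> 0})))"
    have "\<And>n. fls_nth f n \<noteq> 0 \<Longrightarrow> \<bar>n\<bar> \<le> Max (insert 0 (abs ` {n. fls_nth f n \<noteq> 0}))"
      using fin by (intro Max_ge) auto
    then show ?thesis using that[of B] unfolding B_def by fastforce
  qed
  define g where "g = Poly (map (\<lambda>i. fls_nth f (int i - int B)) [0..<2*B+1])"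
  have "f = fls_shift (int B) (lpoly g)"
  proof (rule fls_eqI)
    fix n
    show "fls_nth f n = fls_nth (fls_shift (int B) (lpoly g)) n"
      using B[of n] by (cases "fls_nth f n = 0")
        (auto simp: lpoly_nth g_def nth_default_def simp del: upt_Suc)
  qed
  moreover have "degree g \<le> 2 * B"
    by (rule degree_le) (simp add: g_def nth_default_def del: upt_Suc)
  ultimately show ?thesis using that by blast
qed

lemma laurent_polys_diff: "f \<in> laurent_polys \<Longrightarrow> g \<in> laurent_polys \<Longrightarrow> f - g \<in> laurent_polys"
  unfolding laurent_polys_def mem_Collect_eq
  by (rule finite_subset[of _ "{n. fls_nth f n \<noteq> 0} \<union> {n. fls_nth g n \<noteq> 0}"]) auto

lemma laurent_polys_uminus: "f \<in> laurent_polys \<Longrightarrow> - f \<in> laurent_polys"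
  by (simp add: laurent_polys_def)

lemma laurent_polys_mult:
  assumes "f \<in> laurent_polys" and "g \<in> laurent_polys"
  shows "f * g \<in> laurent_polys"
proof -
  obtain k f' l g' where "f = fls_shift (int k) (lpoly f')" and "g = fls_shift (int l) (lpoly g')"
    using assms by (meson laurent_polyE)
  then have "f * g = fls_shift (int k + int l) (lpoly (f' * g'))"
    by (simp add: fls_times_both_shifted_simp lpoly_mult)
  then show ?thesis by simp
qed

lemma laurent_polys_shift: "f \<in> laurent_polys \<Longrightarrow> fls_shift k f \<in> laurent_polys"
  by (erule laurent_polyE) (simp only: fls_shift_fls_shift shift_lpoly_in_laurent_polys)

lemma lpoly_in_laurent_polys [simp]: "lpoly g \<in> laurent_polys"
  using shift_lpoly_in_laurent_polys[of 0 g] by simp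

lemma fls_const_in_laurent_polys [simp]: "fls_const c \<in> laurent_polys"
  using lpoly_in_laurent_polys[of "[:c:]"] by (simp add: lpoly_pCons_0)

lemma numeral_in_laurent_polys [simp]: "numeral n \<in> laurent_polys"
  using fls_const_in_laurent_polys[of "numeral n"] by simp

lemma zero_in_laurent_polys [simp]: "0 \<in> laurent_polys"
  and one_in_laurent_polys [simp]: "1 \<in> laurent_polys"
  using fls_const_in_laurent_polys[of 0] fls_const_in_laurent_polys[of 1] by simp_all

lemma lrefl_nth:
  assumes "f \<in> laurent_polys"
  shows "fls_nth (lrefl f) n = fls_nth f (- n)"
proof -
  let ?S = "{n. fls_nth f n \<noteq> 0}"
  have "fls_nth (lrefl f) n = (\<Sum>m\<in>?S. if m = - n then fls_nth f m else 0)"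
    unfolding lrefl_def fls_nth_sum by (rule sum.cong) auto
  also have "\<dots> = fls_nth f (- n)"
    using assms by (simp add: laurent_polys_def)
  finally show ?thesis .
qed

lemma lrefl_in_laurent_polys:
  assumes "f \<in> laurent_polys"
  shows "lrefl f \<in> laurent_polys"
proof -
  have "{n. fls_nth (lrefl f) n \<noteq> 0} = uminus ` {n. fls_nth f n \<noteq> 0}"
    by (auto simp: lrefl_nth[OF assms] image_iff) (metis minus_minus)
  then show ?thesis using assms unfolding laurent_polys_def by simp
qed

lemma lrefl_diff: "f \<in> laurent_polys \<Longrightarrow> g \<in> laurent_polys \<Longrightarrow> lrefl (f - g) = lrefl f - lrefl g"
  by (rule fls_eqI) (simp add: lrefl_nth laurent_polys_diff)

lemma lrefl_lrefl: "f \<in> laurent_polys \<Longrightarrow> lrefl (lrefl f) = f"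
  by (rule fls_eqI) (simp add: lrefl_nth lrefl_in_laurent_polys)

lemma lrefl_fls_const [simp]: "lrefl (fls_const c) = fls_const c"
  by (rule fls_eqI) (simp add: lrefl_nth)

lemma lrefl_0 [simp]: "lrefl 0 = 0"
  and lrefl_1 [simp]: "lrefl 1 = 1"
  and lrefl_numeral [simp]: "lrefl (numeral n) = numeral n"
  using lrefl_fls_const[of 0] lrefl_fls_const[of 1] lrefl_fls_const[of "numeral n"]
  by simp_all

lemma lrefl_shift_lpoly:
  "lrefl (fls_shift k (lpoly g)) = fls_shift (int (degree g) - k) (lpoly (reflect_poly g))"
  by (rule fls_eqI)
    (auto simp: lrefl_nth lpoly_nth coeff_reflect_poly coeff_eq_0 nat_diff_distrib
      intro!: arg_cong[where f = "coeff g"])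

lemma lrefl_shift_lpoly_balanced:
  assumes "degree g \<le> 2 * k"
  shows "lrefl (fls_shift (int k) (lpoly g))
           = fls_shift (int k) (lpoly (monom 1 (2 * k - degree g) * reflect_poly g))"
  using assms by (simp add: lrefl_shift_lpoly lpoly_monom_mult)

lemma lrefl_mult:
  assumes "f \<in> laurent_polys" and "g \<in> laurent_polys"
  shows "lrefl (f * g) = lrefl f * lrefl g"
proof -
  obtain k f' l g' where f: "f = fls_shift (int k) (lpoly f')" and g: "g = fls_shift (int l) (lpoly g')"
    using assms by (meson laurent_polyE)
  show ?thesis
  proof (cases "f' = 0 \<or> g' = 0")
    case False
    then have "degree (f' * g') = degree f' + degree g'" by (simp add: degree_mult_eq)
    then show ?thesis
      by (simp add: f g fls_times_both_shifted_simp lpoly_mult [symmetric] lrefl_shift_lpoly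
          reflect_poly_mult algebra_simps)
  qed (auto simp: f g)
qed

section \<open>Divisibility of Laurent polynomials\<close>

lemma coprime_linear_poly:
  fixes A :: "complex poly"
  assumes "poly A c \<noteq> 0"
  shows "coprime [:-c, 1:] A"
proof -
  have "prime_elem [:-c, 1:]" by (rule prime_elem_linear_field_poly) simp
  moreover have "\<not> [:-c, 1:] dvd A" using assms poly_eq_0_iff_dvd by blast
  ultimately show ?thesis by (rule prime_elem_imp_coprime)
qed

lemma coprime_monom_poly:
  fixes A :: "complex poly"
  assumes "poly A 0 \<noteq> 0"
  shows "coprime (monom 1 n) A"
  using coprime_linear_poly[OF assms] by (simp add: monom_altdef)

lemma shift_lpoly_eq_iff:
  "fls_shift k (lpoly G) = fls_shift j (lpoly H)
     \<longleftrightarrow> monom 1 (nat (j - k)) * G = monom 1 (nat (k - j)) * H"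
proof -
  have "fls_shift k (lpoly G) = fls_shift j (lpoly H)
      \<longleftrightarrow> fls_shift (- max k j) (fls_shift k (lpoly G)) = fls_shift (- max k j) (fls_shift j (lpoly H))"
    by (simp only: fls_shift_eq_iff)
  also have "\<dots> \<longleftrightarrow> lpoly (monom 1 (nat (j - k)) * G) = lpoly (monom 1 (nat (k - j)) * H)"
    by (simp add: lpoly_monom_mult max_def)
  finally show ?thesis by simp
qed

lemma ldvd_mult_right:
  assumes "ldvd A f" and "g \<in> laurent_polys"
  shows "ldvd A (f * g)"
proof -
  obtain r where "r \<in> laurent_polys" and "f = A * r" using assms(1) by (auto simp: ldvd_def)
  then show ?thesis
    using assms(2) unfolding ldvd_def by (metis laurent_polys_mult mult.assoc)
qed

lemma ldvd_diff:
  assumes "ldvd A f" and "ldvd A g"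
  shows "ldvd A (f - g)"
proof -
  obtain r r' where "r \<in> laurent_polys" "f = A * r" "r' \<in> laurent_polys" "g = A * r'"
    using assms by (auto simp: ldvd_def)
  then show ?thesis unfolding ldvd_def
    by (metis laurent_polys_diff right_diff_distrib)
qed

lemma ldvd_uminus_iff [simp]: "ldvd A (- f) \<longleftrightarrow> ldvd A f"
  unfolding ldvd_def by (metis laurent_polys_uminus minus_minus mult_minus_right)

lemma ldvd_times_2_iff [simp]: "ldvd A (2 * f) \<longleftrightarrow> ldvd A f"
proof
  assume "ldvd A (2 * f)"
  then have "ldvd A (2 * f * fls_const (1 / 2))"
    by (rule ldvd_mult_right) simp
  moreover have "2 * f * fls_const (1 / 2) = f"
    by (simp add: mult.commute mult.left_commute fls_const_mult_const [symmetric]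
        flip: fls_const_numeral)
  ultimately show "ldvd A f" by simp
next
  assume "ldvd A f"
  then show "ldvd A (2 * f)"
    using ldvd_mult_right[of A f 2] by (simp add: mult.commute)
qed

lemma ldvd_shift_lpoly_mult:
  assumes "A dvd B" and "z \<in> laurent_polys"
  shows "ldvd (lpoly A) (fls_shift k (lpoly B) * z)"
proof -
  obtain C where "B = A * C" using assms(1) by blast
  then have "fls_shift k (lpoly B) * z = lpoly A * (fls_shift k (lpoly C) * z)"
    by (simp add: lpoly_mult fls_shifted_times_simps mult.assoc)
  then show ?thesis
    unfolding ldvd_def using assms(2) laurent_polys_mult shift_lpoly_in_laurent_polys by blast
qed

lemma ldvd_lpoly_mult: "A dvd B \<Longrightarrow> z \<in> laurent_polys \<Longrightarrow> ldvd (lpoly A) (lpoly B * z)"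
  using ldvd_shift_lpoly_mult[of A B z 0] by simp

lemma ldvd_shift_lpoly_iff:
  assumes "poly A 0 \<noteq> 0"
  shows "ldvd (lpoly A) (fls_shift k (lpoly G)) \<longleftrightarrow> A dvd G"
proof
  assume "ldvd (lpoly A) (fls_shift k (lpoly G))"
  then obtain r where "r \<in> laurent_polys" and r: "fls_shift k (lpoly G) = lpoly A * r"
    by (auto simp: ldvd_def)
  then obtain j R where "r = fls_shift (int j) (lpoly R)" by (meson laurent_polyE)
  with r have "fls_shift k (lpoly G) = fls_shift (int j) (lpoly (A * R))"
    by (simp add: lpoly_mult fls_shifted_times_simps)
  then have "monom 1 (nat (int j - k)) * G = monom 1 (nat (k - int j)) * (A * R)"
    by (simp only: shift_lpoly_eq_iff)
  then have "A dvd monom 1 (nat (int j - k)) * G" by (metis dvd_mult dvd_triv_left)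
  then show "A dvd G"
    by (metis coprime_commute coprime_dvd_mult_right_iff coprime_monom_poly[OF assms])
next
  assume "A dvd G"
  then show "ldvd (lpoly A) (fls_shift k (lpoly G))"
    using ldvd_shift_lpoly_mult[of A G 1] by simp
qed

lemma ldvd_lpoly_iff: "poly A 0 \<noteq> 0 \<Longrightarrow> ldvd (lpoly A) (lpoly G) \<longleftrightarrow> A dvd G"
  using ldvd_shift_lpoly_iff[of A 0 G] by simp

section \<open>Multiplicities of the roots 1 and -1\<close>

lemma reflect_poly_linear_unit:
  assumes "c \<in> {1, -1 :: complex}"
  shows "reflect_poly [:-c, 1:] = smult (-c) [:-c, 1:]"
  using assms by (auto simp: reflect_poly_def)

lemma reflect_poly_minus_1: "reflect_poly [:-1, 1:] = smult (-1) [:-1, 1::complex:]"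
  and reflect_poly_plus_1: "reflect_poly [:1, 1:] = [:1, 1::complex:]"
  using reflect_poly_linear_unit[of 1] reflect_poly_linear_unit[of "-1"] by simp_all

lemma poly_reflect_poly_unit:
  assumes "c \<in> {1, -1 :: complex}"
  shows "poly (reflect_poly g) c = c ^ degree g * poly g c"
  using assms by (auto simp: poly_reflect_poly_nz)

lemma unit_power_even: "c \<in> {1, -1 :: complex} \<Longrightarrow> even n \<Longrightarrow> c ^ n = 1"
  by (auto elim!: evenE simp: power_mult)

lemma poly_monom_reflect_poly_unit:
  assumes "c \<in> {1, -1 :: complex}" and "even (j + degree g)"
  shows "poly (monom 1 j * reflect_poly g) c = poly g c"
  using assms by (simp add: poly_monom poly_reflect_poly_unit mult.assoc flip: power_add
      add: unit_power_even)

lemma linear_power_Suc_dvd: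
  fixes g :: "complex poly"
  assumes c: "c \<in> {1, -1}" and "odd N" and "[:-c, 1:] ^ N dvd g"
    and "[:-c, 1:] ^ Suc N dvd g - monom 1 j * reflect_poly g"
    and "even (j + degree g)"
  shows "[:-c, 1:] ^ Suc N dvd g"
proof -
  let ?m = "[:-c, 1:]"
  obtain u where g: "g = ?m ^ N * u" using assms(3) by blast
  show ?thesis
  proof (cases "u = 0")
    case False
    have "reflect_poly g = smult ((-c) ^ N) (?m ^ N) * reflect_poly u"
      by (simp only: g reflect_poly_mult reflect_poly_power reflect_poly_linear_unit[OF c] smult_power)
    then have "g - monom 1 j * reflect_poly g = ?m ^ N * (u + smult (c ^ N) (monom 1 j * reflect_poly u))"
      using \<open>odd N\<close> by (simp add: g algebra_simps)
    with assms(4) have "?m ^ N * ?m dvd ?m ^ N * (u + smult (c ^ N) (monom 1 j * reflect_poly u))"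
      by (simp add: mult.commute)
    then have "?m dvd u + smult (c ^ N) (monom 1 j * reflect_poly u)"
      by (subst (asm) dvd_times_left_cancel_iff) simp_all
    then have "poly u c + c ^ (j + (N + degree u)) * poly u c = 0"
      by (simp add: poly_eq_0_iff_dvd [symmetric] poly_monom poly_reflect_poly_unit[OF c] power_add
          mult_ac)
    moreover have "degree g = N + degree u"
      using False by (simp add: g degree_mult_eq degree_linear_power)
    then have "even (j + (N + degree u))" using \<open>even (j + degree g)\<close> by simp
    then have "c ^ (j + (N + degree u)) = 1" using c by (rule unit_power_even [rotated])
    ultimately have "poly u c = 0" by simp
    then have "?m dvd u" by (simp add: poly_eq_0_iff_dvd)
    then have "?m ^ N * ?m dvd g" unfolding g by (rule mult_dvd_mono [OF dvd_refl])
    then show ?thesis by (simp add: mult.commute)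
  qed (simp add: g)
qed

lemma linear_power_dvd_even_part:
  fixes P g :: "complex poly"
  assumes c: "c \<in> {1, -1}" and "[:-c, 1:] ^ M dvd P"
    and "P dvd g * ([:-1, 1:] * [:1, 1:])" and "P dvd g - monom 1 j * reflect_poly g"
    and "even (j + degree g)"
  shows "[:-c, 1:] ^ (2 * (M div 2)) dvd g"
proof (cases M)
  case (Suc N)
  let ?m = "[:-c, 1:]"
  have "[:-1, 1:] * [:1, 1:] = ?m * [:c, 1:]" using c by auto
  with assms(2,3) have "?m ^ M dvd (g * ?m) * [:c, 1:]"
    by (metis dvd_trans mult.assoc)
  moreover have "coprime (?m ^ M) [:c, 1:]"
    using c coprime_linear_poly[of "[:c, 1:]" c] by auto
  ultimately have "?m ^ M dvd g * ?m" using coprime_dvd_mult_left_iff by blast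
  then have "?m ^ N * ?m dvd g * ?m" by (simp only: Suc power_Suc2)
  then have low: "?m ^ N dvd g" by (subst (asm) dvd_times_right_cancel_iff) simp_all
  show ?thesis
  proof (cases "even M")
    case True
    with Suc have "odd N" by simp
    have "?m ^ Suc N dvd g"
      using linear_power_Suc_dvd[OF c \<open>odd N\<close> low] assms(2,4,5) Suc by (meson dvd_trans)
    with True show ?thesis by (simp add: Suc)
  next
    case False
    then have "2 * (M div 2) = N" using Suc by presburger
    with low show ?thesis by simp
  qed
qed simp

definition tilde_poly :: "nat \<Rightarrow> nat \<Rightarrow> complex poly \<Rightarrow> complex poly" where
  "tilde_poly L K Pstar = [:-1, 1:] ^ (2 * (L div 2)) * [:1, 1:] ^ (2 * (K div 2)) * Pstar"

lemma tilde_poly_dvd_of_bracket_conditions: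
  fixes P Pstar g :: "complex poly"
  assumes P: "P = [:-1, 1:] ^ L * [:1, 1:] ^ K * Pstar"
    and "poly Pstar 1 \<noteq> 0" and "poly Pstar (-1) \<noteq> 0"
    and "P dvd g * ([:-1, 1:] * [:1, 1:])" and "P dvd g - monom 1 j * reflect_poly g"
    and "even (j + degree g)"
  shows "tilde_poly L K Pstar dvd g"
proof -
  let ?m = "[:-1, 1::complex:]" and ?p = "[:1, 1::complex:]"
  have "?m ^ (2 * (L div 2)) dvd g"
    using linear_power_dvd_even_part[of 1 L P g j] assms(4-6) by (simp add: P)
  moreover have "?p ^ (2 * (K div 2)) dvd g"
    using linear_power_dvd_even_part[of "-1" K P g j] assms(4-6) by (simp add: P)
  moreover have "Pstar dvd g"
  proof -
    have "coprime Pstar (?m * ?p)"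
      using coprime_linear_poly[OF assms(2)] coprime_linear_poly[OF assms(3)]
      by (simp only: coprime_mult_right_iff coprime_commute) simp
    moreover have "Pstar dvd g * (?m * ?p)" using P assms(4) dvd_trans by fastforce
    ultimately show ?thesis using coprime_dvd_mult_left_iff by blast
  qed
  moreover have "coprime ?m ?p" using coprime_linear_poly[of ?p 1] by simp
  moreover have "coprime (?m ^ (2 * (L div 2)) * ?p ^ (2 * (K div 2))) Pstar"
    using coprime_linear_poly[OF assms(2)] coprime_linear_poly[OF assms(3)]
    by simp
  ultimately show ?thesis
    unfolding tilde_poly_def by (simp add: divides_mult)
qed

lemma tilde_poly_times_odd_part:
  "[:-1, 1:] ^ L * [:1, 1:] ^ K * Pstar
     = tilde_poly L K Pstar * ([:-1, 1:] ^ (L mod 2) * [:1, 1:] ^ (K mod 2))"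
proof -
  have "[:-1, 1::complex:] ^ L = [:-1, 1:] ^ (2 * (L div 2)) * [:-1, 1:] ^ (L mod 2)"
    and "[:1, 1::complex:] ^ K = [:1, 1:] ^ (2 * (K div 2)) * [:1, 1:] ^ (K mod 2)"
    by (simp_all flip: power_add)
  then show ?thesis unfolding tilde_poly_def by (simp only: ac_simps)
qed

lemma dvd_tilde_poly_times:
  "[:-1, 1:] ^ L * [:1, 1:] ^ K * Pstar dvd tilde_poly L K Pstar * ([:-1, 1:] * [:1, 1:])"
proof -
  have "[:-1, 1::complex:] ^ (L mod 2) dvd [:-1, 1:] ^ 1" and "[:1, 1::complex:] ^ (K mod 2) dvd [:1, 1:] ^ 1"
    by (simp_all only: le_imp_power_dvd mod_less_eq_dividend mod2_eq_if) simp_all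
  then show ?thesis
    unfolding tilde_poly_times_odd_part power_one_right by (intro mult_dvd_mono dvd_refl)
qed

lemma dvd_tilde_poly_iff:
  assumes "Pstar \<noteq> 0"
  shows "[:-1, 1:] ^ L * [:1, 1:] ^ K * Pstar dvd tilde_poly L K Pstar \<longleftrightarrow> even L \<and> even K"
proof
  assume "[:-1, 1:] ^ L * [:1, 1:] ^ K * Pstar dvd tilde_poly L K Pstar"
  moreover have "tilde_poly L K Pstar \<noteq> 0" using assms by (simp add: tilde_poly_def)
  ultimately have "is_unit ([:-1, 1::complex:] ^ (L mod 2) * [:1, 1:] ^ (K mod 2))"
    unfolding tilde_poly_times_odd_part by simp
  then have "degree ([:-1, 1::complex:] ^ (L mod 2) * [:1, 1:] ^ (K mod 2)) = 0"
    by (simp add: is_unit_iff_degree)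
  then show "even L \<and> even K"
    by (simp add: degree_mult_eq degree_linear_power even_iff_mod_2_eq_zero)
next
  assume "even L \<and> even K"
  then show "[:-1, 1:] ^ L * [:1, 1:] ^ K * Pstar dvd tilde_poly L K Pstar"
    by (simp add: tilde_poly_def)
qed

lemma reflect_tilde_poly:
  assumes "reflect_poly Pstar = Pstar"
  shows "reflect_poly (tilde_poly L K Pstar) = tilde_poly L K Pstar"
proof -
  have "reflect_poly ([:-1, 1::complex:] ^ (2 * n)) = smult ((-1) ^ (2 * n)) ([:-1, 1:] ^ (2 * n))" for n
    by (simp only: reflect_poly_power reflect_poly_minus_1 smult_power)
  then have "reflect_poly ([:-1, 1::complex:] ^ (2 * n)) = [:-1, 1:] ^ (2 * n)" for n
    by simp
  moreover have "reflect_poly ([:1, 1::complex:] ^ n) = [:1, 1:] ^ n" for n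
    by (simp only: reflect_poly_power reflect_poly_plus_1)
  ultimately show ?thesis
    unfolding tilde_poly_def by (simp only: reflect_poly_mult assms)
qed

lemma even_degree_tilde_poly:
  assumes "even (degree Pstar)"
  shows "even (degree (tilde_poly L K Pstar))"
  using assms by (cases "Pstar = 0") (simp_all add: tilde_poly_def degree_mult_eq degree_linear_power)

lemma reciprocal_poly_0_nonzero:
  assumes "reciprocal P"
  shows "poly P 0 \<noteq> 0"
proof -
  have "coeff (reflect_poly P) 0 = 1" using assms by (simp add: reciprocal_def)
  moreover have "reflect_poly P = P \<or> reflect_poly P = - P" using assms by (simp add: reciprocal_def)
  ultimately have "coeff P 0 \<noteq> 0" by (elim disjE) (auto simp del: coeff_0_reflect_poly)
  then show ?thesis by (simp add: poly_0_coeff_0)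
qed

lemma reciprocal_cofactor:
  fixes P Pstar :: "complex poly"
  assumes "reciprocal P" and P: "P = [:-1, 1:] ^ L * [:1, 1:] ^ K * Pstar"
    and "poly Pstar 1 \<noteq> 0" and "poly Pstar (-1) \<noteq> 0"
  shows "reflect_poly Pstar = Pstar" and "even (degree Pstar)"
proof -
  let ?Q = "[:-1, 1::complex:] ^ L * [:1, 1:] ^ K"
  obtain e :: complex where e: "reflect_poly P = smult e P" and "e \<in> {1, -1}"
    using assms(1) unfolding reciprocal_def by (metis insertCI smult_1_left smult_minus_left)
  have "reflect_poly P = smult ((-1) ^ L) (?Q * reflect_poly Pstar)"
    by (simp only: P reflect_poly_mult reflect_poly_power reflect_poly_minus_1 reflect_poly_plus_1
        smult_power mult_smult_left)
  with e have "?Q * smult ((-1) ^ L) (reflect_poly Pstar) = ?Q * smult e Pstar"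
    by (simp only: P mult_smult_right mult.assoc)
  then have eq: "smult ((-1) ^ L) (reflect_poly Pstar) = smult e Pstar"
    by (rule mult_left_cancel [THEN iffD1, rotated]) simp
  then have "poly (smult ((-1) ^ L) (reflect_poly Pstar)) 1 = poly (smult e Pstar) 1" by simp
  then have "(-1) ^ L * poly Pstar 1 = e * poly Pstar 1"
    using poly_reflect_poly_unit[of 1 Pstar] by simp
  then have "(-1) ^ L = e" using assms(3) by simp
  with eq \<open>e \<in> {1, -1}\<close> show "reflect_poly Pstar = Pstar" by auto
  then have "(-1) ^ degree Pstar * poly Pstar (-1) = poly Pstar (-1)"
    using poly_reflect_poly_unit[of "-1" Pstar] by simp
  then show "even (degree Pstar)" using assms(4) by (simp add: minus_one_power_iff split: if_splits)
qed

section \<open>Antisymmetric and symmetric Laurent polynomials\<close>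

lemma antisymmetric_laurent_poly_ldvd:
  assumes "s \<in> laurent_polys" and "lrefl s = - s"
  shows "ldvd (lpoly ([:-1, 1:] * [:1, 1:])) s"
proof -
  obtain k h where s: "s = fls_shift (int k) (lpoly h)" and deg: "degree h \<le> 2 * k"
    using assms(1) by (rule laurent_polyE)
  have "fls_shift (int k) (lpoly (monom 1 (2 * k - degree h) * reflect_poly h))
      = fls_shift (int k) (lpoly (- h))"
    using assms(2) deg by (simp add: s lrefl_shift_lpoly_balanced lpoly_uminus)
  then have h: "monom 1 (2 * k - degree h) * reflect_poly h = - h"
    by (simp only: fls_shift_eq_iff lpoly_eq_iff)
  have "poly h c = 0" if c: "c \<in> {1, -1}" for c
  proof -
    have "poly h c = - poly h c"
      using poly_monom_reflect_poly_unit[OF c, of "2 * k - degree h" h] deg by (simp add: h)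
    then show ?thesis by simp
  qed
  then have "[:-1, 1:] dvd h" and "[:1, 1:] dvd h"
    using poly_eq_0_iff_dvd[of h 1] poly_eq_0_iff_dvd[of h "-1"] by auto
  moreover have "coprime [:-1, 1::complex:] [:1, 1:]" using coprime_linear_poly[of "[:1, 1:]" 1] by simp
  ultimately have "[:-1, 1:] * [:1, 1:] dvd h" by (rule divides_mult)
  then show ?thesis using ldvd_shift_lpoly_mult[of _ h 1 "int k"] by (simp add: s)
qed

lemma lrefl_centered_shift_lpoly:
  assumes "reflect_poly A = A" and "even (degree A)"
  shows "lrefl (fls_shift (int (degree A div 2)) (lpoly A)) = fls_shift (int (degree A div 2)) (lpoly A)"
proof -
  have "int (degree A) - int (degree A div 2) = int (degree A div 2)" using assms(2) by (elim evenE) simp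
  then show ?thesis by (simp only: lrefl_shift_lpoly assms(1))
qed

lemma ldvd_times_antisymmetric:
  assumes "P dvd A * ([:-1, 1:] * [:1, 1:])" and "ldvd (lpoly A) p"
    and "s \<in> laurent_polys" and "lrefl s = - s"
  shows "ldvd (lpoly P) (p * s)"
proof -
  obtain v y where "v \<in> laurent_polys" "p = lpoly A * v"
    and "y \<in> laurent_polys" "s = lpoly ([:-1, 1:] * [:1, 1:]) * y"
    using assms(2) antisymmetric_laurent_poly_ldvd[OF assms(3,4)] by (auto simp: ldvd_def)
  then have "p * s = lpoly (A * ([:-1, 1:] * [:1, 1:])) * (v * y)"
    by (simp only: lpoly_mult mult_ac)
  then show ?thesis
    using ldvd_lpoly_mult[OF assms(1) laurent_polys_mult] \<open>v \<in> laurent_polys\<close> \<open>y \<in> laurent_polys\<close>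
    by simp
qed

lemma ldvd_lrefl_commutator:
  assumes "P dvd A * ([:-1, 1:] * [:1, 1:])" and "reflect_poly A = A" and "even (degree A)"
    and "ldvd (lpoly A) p" and "r \<in> laurent_polys"
  shows "ldvd (lpoly P) (p * lrefl r - lrefl p * r)"
proof -
  define d where "d = int (degree A div 2)"
  define Q where "Q = fls_shift d (lpoly A)"
  have Q: "Q \<in> laurent_polys" "lrefl Q = Q"
    using lrefl_centered_shift_lpoly[OF assms(2,3)] by (simp_all add: Q_def d_def)
  \<comment> \<open>with \<open>p = Q * w\<close> and \<open>Q\<close> reflection-invariant, the commutator is \<open>Q\<close> times
    an antisymmetric \<open>z\<close>\<close>
  obtain v where "v \<in> laurent_polys" and "p = lpoly A * v" using assms(4) by (auto simp: ldvd_def)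
  define w where "w = fls_shift (- d) v"
  have w: "w \<in> laurent_polys" and p: "p = Q * w"
    using \<open>v \<in> laurent_polys\<close> \<open>p = lpoly A * v\<close>
    by (simp_all add: w_def Q_def laurent_polys_shift fls_times_both_shifted_simp)
  define z where "z = w * lrefl r - lrefl w * r"
  have z: "z \<in> laurent_polys" "lrefl z = - z"
    using w assms(5)
    by (simp_all add: z_def laurent_polys_diff laurent_polys_mult lrefl_in_laurent_polys lrefl_diff
        lrefl_mult lrefl_lrefl)
  have eq: "p * lrefl r - lrefl p * r = Q * z"
    using Q w by (simp add: p z_def lrefl_mult algebra_simps)
  have "ldvd (lpoly A) Q"
    using ldvd_shift_lpoly_mult[of A A 1 d] by (simp add: Q_def)
  then show ?thesis
    unfolding eq by (rule ldvd_times_antisymmetric[OF assms(1) _ z])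
qed

section \<open>The ideals of the Onsager algebra\<close>

lemma OA_iff:
  "(a, b, c) \<in> OA \<longleftrightarrow> a \<in> laurent_polys \<and> c \<in> laurent_polys \<and> b = lrefl a \<and> lrefl c = - c"
  by (auto simp: OA_def)

lemma lbr_in_OA:
  assumes "x \<in> OA" and "y \<in> OA"
  shows "lbr x y \<in> OA"
proof -
  obtain p q r s where x: "x = (p, lrefl p, q)" and y: "y = (r, lrefl r, s)"
    and LP: "p \<in> laurent_polys" "q \<in> laurent_polys" "r \<in> laurent_polys" "s \<in> laurent_polys"
    and anti: "lrefl q = - q" "lrefl s = - s"
    using assms by (cases x, cases y) (auto simp: OA_iff)
  have "lrefl (2 * (q * r - p * s)) = 2 * (lrefl p * s - q * lrefl r)"
    using LP anti by (simp add: lrefl_mult lrefl_diff laurent_polys_mult laurent_polys_diff algebra_simps)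
  moreover have "lrefl (p * lrefl r - lrefl p * r) = - (p * lrefl r - lrefl p * r)"
    using LP by (simp add: lrefl_mult lrefl_diff laurent_polys_mult laurent_polys_diff
        lrefl_in_laurent_polys lrefl_lrefl)
  ultimately show ?thesis
    using LP by (simp add: x y OA_iff laurent_polys_mult laurent_polys_diff lrefl_in_laurent_polys)
qed

definition OA_dvd :: "complex poly \<Rightarrow> complex poly \<Rightarrow> loopel set" where
  "OA_dvd A B = {(p, lrefl p, q) | p q. (p, lrefl p, q) \<in> OA \<and> ldvd (lpoly A) p \<and> ldvd (lpoly B) q}"

lemma OA_dvd_iff:
  "x \<in> OA_dvd A B \<longleftrightarrow> x \<in> OA \<and> ldvd (lpoly A) (fst x) \<and> ldvd (lpoly B) (snd (snd x))"
  by (cases x) (auto simp: OA_dvd_def OA_iff)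

lemma IP_eq_OA_dvd: "IP P = OA_dvd P P"
  by (simp add: IP_def OA_dvd_def)

lemma lpoly_in_OA_dvd_iff: "(lpoly G, lrefl (lpoly G), 0) \<in> OA_dvd A B \<longleftrightarrow> ldvd (lpoly A) (lpoly G)"
  using ldvd_lpoly_mult[of B 0 0] by (simp add: OA_dvd_iff OA_iff)

lemma OA_dvd_subset_ZI_IP:
  assumes "P dvd A * ([:-1, 1:] * [:1, 1:])" and "reflect_poly A = A" and "even (degree A)"
  shows "OA_dvd A P \<subseteq> ZI (IP P)"
proof
  fix x assume "x \<in> OA_dvd A P"
  then obtain p q where x: "x = (p, lrefl p, q)" and "x \<in> OA"
    and p: "ldvd (lpoly A) p" and q: "ldvd (lpoly P) q"
    by (cases x) (auto simp: OA_dvd_iff OA_iff)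
  have "lbr x y \<in> IP P" if "y \<in> OA" for y
  proof -
    obtain r s where y: "y = (r, lrefl r, s)" and r: "r \<in> laurent_polys"
      and s: "s \<in> laurent_polys" "lrefl s = - s"
      using \<open>y \<in> OA\<close> by (cases y) (auto simp: OA_iff)
    have "ldvd (lpoly P) (q * r - p * s)"
      using ldvd_mult_right[OF q r] ldvd_times_antisymmetric[OF assms(1) p s] by (rule ldvd_diff)
    moreover have "ldvd (lpoly P) (p * lrefl r - lrefl p * r)"
      using assms p r by (rule ldvd_lrefl_commutator)
    moreover have "lbr x y = (2 * (q * r - p * s), 2 * (lrefl p * s - q * lrefl r), p * lrefl r - lrefl p * r)"
      by (simp only: x y lbr.simps)
    ultimately show ?thesis
      using lbr_in_OA[OF \<open>x \<in> OA\<close> \<open>y \<in> OA\<close>]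
      by (simp only: IP_eq_OA_dvd OA_dvd_iff fst_conv snd_conv ldvd_times_2_iff)
  qed
  with \<open>x \<in> OA\<close> show "x \<in> ZI (IP P)" by (simp add: ZI_def)
qed

lemma ZI_IP_subset_OA_dvd_tilde_poly:
  assumes P: "P = [:-1, 1:] ^ L * [:1, 1:] ^ K * Pstar" and "poly P 0 \<noteq> 0"
    and "poly Pstar 1 \<noteq> 0" and "poly Pstar (-1) \<noteq> 0"
  shows "ZI (IP P) \<subseteq> OA_dvd (tilde_poly L K Pstar) P"
proof
  fix x assume x: "x \<in> ZI (IP P)"
  then have "x \<in> OA" by (simp add: ZI_def)
  then obtain p q where x_eq: "x = (p, lrefl p, q)" and "p \<in> laurent_polys"
    by (cases x) (auto simp: OA_iff)
  have bracket: "lbr x y \<in> OA_dvd P P" if "y \<in> OA" for y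
    using x that by (simp add: ZI_def IP_eq_OA_dvd)
  \<comment> \<open>bracket \<open>x\<close> with \<open>e + f = (1, 1, 0)\<close> and with \<open>(t - 1/t) h = (0, 0, s)\<close>\<close>
  define s where "s = fls_shift 1 (lpoly ([:-1, 1:] * [:1, 1:]))"
  have "reflect_poly ([:-1, 1:] * [:1, 1:]) = - ([:-1, 1:] * [:1, 1::complex:])"
    by (simp only: reflect_poly_mult reflect_poly_minus_1 reflect_poly_plus_1) simp
  moreover have "degree ([:-1, 1:] * [:1, 1::complex:]) = 2"
    by (simp add: degree_mult_eq del: mult_pCons_left mult_pCons_right)
  ultimately have "lrefl s = - s"
    by (simp add: s_def lrefl_shift_lpoly lpoly_uminus del: mult_pCons_left mult_pCons_right)
  then have "(1, 1, 0) \<in> OA" and "(0, 0, s) \<in> OA" by (simp_all add: OA_iff s_def)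
  from bracket[OF this(1)] bracket[OF this(2)]
  have q: "ldvd (lpoly P) q" and anti: "ldvd (lpoly P) (p - lrefl p)" and sym: "ldvd (lpoly P) (p * s)"
    by (simp_all add: x_eq OA_dvd_iff)
  obtain k g where p: "p = fls_shift (int k) (lpoly g)" and deg: "degree g \<le> 2 * k"
    using \<open>p \<in> laurent_polys\<close> by (rule laurent_polyE)
  have "p * s = fls_shift (int k + 1) (lpoly (g * ([:-1, 1:] * [:1, 1:])))"
    by (simp only: p s_def fls_times_both_shifted_simp lpoly_mult)
  with sym have "P dvd g * ([:-1, 1:] * [:1, 1:])"
    using ldvd_shift_lpoly_iff[OF assms(2)] by simp
  moreover have "p - lrefl p = fls_shift (int k) (lpoly (g - monom 1 (2 * k - degree g) * reflect_poly g))"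
    using deg by (simp add: p lrefl_shift_lpoly_balanced lpoly_diff)
  with anti have "P dvd g - monom 1 (2 * k - degree g) * reflect_poly g"
    using ldvd_shift_lpoly_iff[OF assms(2)] by simp
  moreover have "even (2 * k - degree g + degree g)" using deg by simp
  ultimately have "tilde_poly L K Pstar dvd g"
    using tilde_poly_dvd_of_bracket_conditions[OF P assms(3,4)] by blast
  then have "ldvd (lpoly (tilde_poly L K Pstar)) p"
    using ldvd_shift_lpoly_mult[of _ g 1] by (simp add: p)
  with \<open>x \<in> OA\<close> q show "x \<in> OA_dvd (tilde_poly L K Pstar) P"
    by (simp add: x_eq OA_dvd_iff)
qed

lemma IP_nontrivial:
  assumes "P \<noteq> 0"
  shows "IP P \<noteq> {(0, 0, 0)}"
proof -
  have "(lpoly P, lrefl (lpoly P), 0) \<in> IP P"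
    using ldvd_lpoly_mult[of P P 1] by (simp add: IP_eq_OA_dvd lpoly_in_OA_dvd_iff)
  with assms show ?thesis by auto
qed

lemma IP_proper:
  assumes "poly P 0 \<noteq> 0" and "degree P > 0"
  shows "IP P \<noteq> OA"
proof
  assume "IP P = OA"
  then have "(lpoly 1, lrefl (lpoly 1), 0) \<in> OA_dvd P P" by (simp add: IP_eq_OA_dvd [symmetric] OA_iff)
  then have "P dvd 1" by (simp only: lpoly_in_OA_dvd_iff ldvd_lpoly_iff[OF assms(1)])
  then have "degree P \<le> degree (1 :: complex poly)" by (rule dvd_imp_degree_le) simp
  then show False using assms(2) by simp
qed

lemma OA_dvd_tilde_poly_eq_IP_iff:
  assumes P: "P = [:-1, 1:] ^ L * [:1, 1:] ^ K * Pstar"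
    and "poly P 0 \<noteq> 0" and "Pstar \<noteq> 0"
  shows "OA_dvd (tilde_poly L K Pstar) P = IP P \<longleftrightarrow> even L \<and> even K"
proof
  let ?Pt = "tilde_poly L K Pstar"
  assume "OA_dvd ?Pt P = IP P"
  moreover have "(lpoly ?Pt, lrefl (lpoly ?Pt), 0) \<in> OA_dvd ?Pt P"
    using ldvd_lpoly_mult[of ?Pt ?Pt 1] by (simp add: lpoly_in_OA_dvd_iff)
  ultimately have "(lpoly ?Pt, lrefl (lpoly ?Pt), 0) \<in> OA_dvd P P"
    by (simp add: IP_eq_OA_dvd)
  then have "P dvd ?Pt" by (simp add: lpoly_in_OA_dvd_iff ldvd_lpoly_iff[OF assms(2)])
  then show "even L \<and> even K"
    using dvd_tilde_poly_iff[OF assms(3)] by (simp add: P)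
next
  assume "even L \<and> even K"
  then show "OA_dvd (tilde_poly L K Pstar) P = IP P"
    by (simp add: P tilde_poly_def IP_eq_OA_dvd)
qed

theorem lemma2:
  fixes P Pstar :: "complex poly" and L K :: nat
  assumes "reciprocal P"
    and "P = [:-1, 1:] ^ L * [:1, 1:] ^ K * Pstar"
    and "poly Pstar 1 \<noteq> 0" and "poly Pstar (-1) \<noteq> 0"
  shows "ZI (IP P) =
           {(p, lrefl p, q) | p q. (p, lrefl p, q) \<in> OA \<and>
              ldvd (lpoly ([:-1, 1:] ^ (2 * (L div 2)) * [:1, 1:] ^ (2 * (K div 2)) * Pstar)) p \<and>
              ldvd (lpoly P) q}
         \<and> (closed_ideal (IP P) \<longleftrightarrow> even L \<and> even K)"
proof -
  have P0: "poly P 0 \<noteq> 0" using assms(1) by (rule reciprocal_poly_0_nonzero)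
  note Pstar = reciprocal_cofactor[OF assms]
  have Pstar0: "Pstar \<noteq> 0" using assms(3) by auto
  have Z: "ZI (IP P) = OA_dvd (tilde_poly L K Pstar) P"
  proof
    show "ZI (IP P) \<subseteq> OA_dvd (tilde_poly L K Pstar) P"
      using assms(2) P0 assms(3,4) by (rule ZI_IP_subset_OA_dvd_tilde_poly)
    show "OA_dvd (tilde_poly L K Pstar) P \<subseteq> ZI (IP P)"
      using dvd_tilde_poly_times reflect_tilde_poly[OF Pstar(1)] even_degree_tilde_poly[OF Pstar(2)]
      unfolding assms(2) by (rule OA_dvd_subset_ZI_IP)
  qed
  moreover have "ZI (IP P) = IP P \<longleftrightarrow> even L \<and> even K"
    unfolding Z by (rule OA_dvd_tilde_poly_eq_IP_iff[OF assms(2) P0 Pstar0])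
  moreover have "IP P \<noteq> {(0, 0, 0)}" using P0 by (intro IP_nontrivial) auto
  moreover have "IP P \<noteq> OA" using P0 assms(1) by (intro IP_proper) (simp_all add: reciprocal_def)
  ultimately show ?thesis
    unfolding closed_ideal_def OA_dvd_def tilde_poly_def by blast
qed

end
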